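(* Let $n\ge3$, $k\ge0$ with $k<n\le 2k$. Let $S\subseteq\mathrm{Inc}(A,B)$ be a maximal independent set of $G_n^k$ which is not reversible and which contains a strict alternating cycle of size $3$ satisfying the Disjoint Property. Then there exist an integer $t\ge1$ and an alternating cycle $C_0$ of size $2t+1$ in $\mathrm{Inc}(A,B)$ satisfying the Matching Conditions such that $S=D(C_0)$.
   Context: For integers $n\ge3$, $k\ge0$, the crown $S_n^k$ is the poset with ground set $A\cup B$, $A=\{a_1,\dots,a_{n+k}\}$, $B=\{b_1,\dots,b_{n+k}\}$, indices cyclic modulo $n+k$; elements of $A$ are pairwise incomparable, as are elements of $B$, and $a_i$ is incomparable to $b_j$ when $j\in\{i,\dots,i+k\}$ (mod $n+k$), while $a_i<b_j$ otherwise. $\mathrm{Inc}(A,B)$ is the set of pairs $(a,b)\in A\times B$ with $a$ incomparable to $b$; $G_n^k$ has vertex set $\mathrm{Inc}(A,B)$ with $(a,b)$ adjacent to $(x,y)$ iff $a<y$ and $x<b$. A set $R\subseteq\mathrm{Inc}(A,B)$ is reversible if some linear extension $L$ of $S_n^k$ has $b<a$ in $L$ for all $(a,b)\in R$. An indexed set $\{(x_\alpha,y_\alpha):\alpha\in[m]\}\subseteq\mathrm{Inc}(A,B)$ is an alternating cycle of size $m$ if $x_\alpha\le y_{\alpha-1}$ for all $\alpha$ (indices cyclic mod $m$); it is strict if $x_\alpha\le y_\beta$ holds iff $\beta=\alpha-1$. Circle conventions: points $u_1,\dots,u_{n+k}$ lie clockwise on a circle and both $a_i$ and $b_i$ are placed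 at $u_i$. For elements $p_1,\dots,p_\ell$, a chain $p_1\,R_1\,p_2\,R_2\cdots p_\ell$ with each $R_j\in\{\prec,\preceq\}$ means that travelling clockwise from the position of $p_1$ until first reaching the position of $p_\ell$ one meets the positions of $p_2,\dots,p_{\ell-1}$ in this order, where $\prec$ requires the two consecutive positions to be distinct and $\preceq$ allows them to coincide. The size of a pair $(v,v')$ with $v$ at $u_i$, $v'$ at $u_j$ is $j-i+1$ modulo $n+k$, taken in $\{1,\dots,n+k\}$. A strict alternating cycle $\{(x_\alpha,y_\alpha):\alpha\in[3]\}$ satisfies the Disjoint Property if $x_1\preceq y_1\prec x_2\preceq y_2\prec x_3\preceq y_3$. An alternating cycle $C_0=\{(x_\alpha,y_\alpha):\alpha\in[2t+1]\}$ (indices mod $2t+1$) satisfies the Matching Conditions if for every $\alpha$: (i) $x_\alpha\preceq y_\alpha\prec x_{\alpha+1}\preceq y_{\alpha+1}$, and (ii) the size of $(x_\alpha,y_{\alpha+t})$ is $k+1$. $D(C_0)$ is the set of all $(x,y)\in\mathrm{Inc}(A,B)$ for which there is $\alpha$ with $x_\alpha\preceq x\preceq y\preceq y_\alpha$. *)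

theory Defs
  imports Main
begin

text \<open>Elements of the crown S_n^k: a_i is Ael i, b_i is Bel i, with indices 0..n+k-1
  (indices are taken cyclically modulo n+k; we use 0-based representatives).\<close>

datatype cel = Ael nat | Bel nat

definition crownA :: "nat \<Rightarrow> nat \<Rightarrow> cel set" where
  "crownA n k = Ael ` {..<n+k}"

definition crownB :: "nat \<Rightarrow> nat \<Rightarrow> cel set" where
  "crownB n k = Bel ` {..<n+k}"

definition crown_elems :: "nat \<Rightarrow> nat \<Rightarrow> cel set" where
  "crown_elems n k = crownA n k \<union> crownB n k"

definition crown_less :: "nat \<Rightarrow> nat \<Rightarrow> cel \<Rightarrow> cel \<Rightarrow> bool" where
  "crown_less n k x y \<longleftrightarrow> (\<exists>i j. x = Ael i \<and> y = Bel j \<and> i < n+k \<and> j < n+k \<and>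
       \<not> (\<exists>d\<le>k. j = (i + d) mod (n+k)))"

definition crown_le :: "nat \<Rightarrow> nat \<Rightarrow> cel \<Rightarrow> cel \<Rightarrow> bool" where
  "crown_le n k x y \<longleftrightarrow> x = y \<or> crown_less n k x y"

definition incomparable :: "nat \<Rightarrow> nat \<Rightarrow> cel \<Rightarrow> cel \<Rightarrow> bool" where
  "incomparable n k x y \<longleftrightarrow> \<not> crown_le n k x y \<and> \<not> crown_le n k y x"

definition Inc :: "nat \<Rightarrow> nat \<Rightarrow> (cel \<times> cel) set" where
  "Inc n k = {(a, b). a \<in> crownA n k \<and> b \<in> crownB n k \<and> incomparable n k a b}"

definition G_adj :: "nat \<Rightarrow> nat \<Rightarrow> cel \<times> cel \<Rightarrow> cel \<times> cel \<Rightarrow> bool" where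
  "G_adj n k p q \<longleftrightarrow> crown_less n k (fst p) (snd q) \<and> crown_less n k (fst q) (snd p)"

definition independent :: "nat \<Rightarrow> nat \<Rightarrow> (cel \<times> cel) set \<Rightarrow> bool" where
  "independent n k S \<longleftrightarrow> S \<subseteq> Inc n k \<and> (\<forall>p\<in>S. \<forall>q\<in>S. \<not> G_adj n k p q)"

definition maximal_independent :: "nat \<Rightarrow> nat \<Rightarrow> (cel \<times> cel) set \<Rightarrow> bool" where
  "maximal_independent n k S \<longleftrightarrow> independent n k S \<and>
     (\<forall>T. independent n k T \<and> S \<subseteq> T \<longrightarrow> T = S)"

definition linear_extension :: "nat \<Rightarrow> nat \<Rightarrow> cel rel \<Rightarrow> bool" where
  "linear_extension n k L \<longleftrightarrow> linear_order_on (crown_elems n k) L \<and>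
     (\<forall>x\<in>crown_elems n k. \<forall>y\<in>crown_elems n k. crown_le n k x y \<longrightarrow> (x, y) \<in> L)"

definition reversible :: "nat \<Rightarrow> nat \<Rightarrow> (cel \<times> cel) set \<Rightarrow> bool" where
  "reversible n k R \<longleftrightarrow> R \<subseteq> Inc n k \<and>
     (\<exists>L. linear_extension n k L \<and> (\<forall>(a, b)\<in>R. (b, a) \<in> L \<and> b \<noteq> a))"

definition alt_cycle :: "nat \<Rightarrow> nat \<Rightarrow> nat \<Rightarrow> (nat \<Rightarrow> cel \<times> cel) \<Rightarrow> bool" where
  "alt_cycle n k m c \<longleftrightarrow> m > 0 \<and> inj_on c {..<m} \<and> c ` {..<m} \<subseteq> Inc n k \<and>
     (\<forall>\<alpha><m. crown_le n k (fst (c \<alpha>)) (snd (c ((\<alpha> + m - 1) mod m))))"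

definition strict_alt_cycle :: "nat \<Rightarrow> nat \<Rightarrow> nat \<Rightarrow> (nat \<Rightarrow> cel \<times> cel) \<Rightarrow> bool" where
  "strict_alt_cycle n k m c \<longleftrightarrow> alt_cycle n k m c \<and>
     (\<forall>\<alpha><m. \<forall>\<beta><m. crown_le n k (fst (c \<alpha>)) (snd (c \<beta>)) \<longleftrightarrow> \<beta> = (\<alpha> + m - 1) mod m)"

text \<open>Circle conventions: a_i and b_i sit at position u_i.\<close>
fun pos :: "cel \<Rightarrow> nat" where
  "pos (Ael i) = i" | "pos (Bel i) = i"

definition cwd :: "nat \<Rightarrow> cel \<Rightarrow> cel \<Rightarrow> nat" where
  "cwd N p q = (pos q + N - pos p) mod N"

text \<open>Chain p_0 R_0 p_1 R_1 ... p_l, with st!j = True meaning R_j is strict (\<prec>) and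
  False meaning \<preceq>. Travelling clockwise from p_0 until first reaching p_l
  (distance cwd in [0,N)), the positions p_1,...,p_{l-1} are met in order.\<close>
definition circ_chain :: "nat \<Rightarrow> cel list \<Rightarrow> bool list \<Rightarrow> bool" where
  "circ_chain N ps st \<longleftrightarrow> ps \<noteq> [] \<and> length st + 1 = length ps \<and>
     (\<forall>j. Suc j < length ps \<longrightarrow>
        cwd N (ps!0) (ps!j) \<le> cwd N (ps!0) (ps!Suc j) \<and>
        (st!j \<longrightarrow> cwd N (ps!0) (ps!j) < cwd N (ps!0) (ps!Suc j)))"

definition pair_size :: "nat \<Rightarrow> cel \<Rightarrow> cel \<Rightarrow> nat" where
  "pair_size N v v' = cwd N v v' + 1"

text \<open>Disjoint Property for a strict alternating cycle of size 3 (indices 0,1,2 for 1,2,3):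
  x1 \<preceq> y1 \<prec> x2 \<preceq> y2 \<prec> x3 \<preceq> y3.\<close>
definition disjoint_property :: "nat \<Rightarrow> nat \<Rightarrow> (nat \<Rightarrow> cel \<times> cel) \<Rightarrow> bool" where
  "disjoint_property n k c \<longleftrightarrow> strict_alt_cycle n k 3 c \<and>
     circ_chain (n+k) [fst (c 0), snd (c 0), fst (c 1), snd (c 1), fst (c 2), snd (c 2)]
                      [False, True, False, True, False]"

definition matching_conditions :: "nat \<Rightarrow> nat \<Rightarrow> nat \<Rightarrow> (nat \<Rightarrow> cel \<times> cel) \<Rightarrow> bool" where
  "matching_conditions n k t c \<longleftrightarrow>
     (\<forall>\<alpha><2*t+1.
        circ_chain (n+k) [fst (c \<alpha>), snd (c \<alpha>), fst (c ((\<alpha>+1) mod (2*t+1))), snd (c ((\<alpha>+1) mod (2*t+1)))]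
                         [False, True, False] \<and>
        pair_size (n+k) (fst (c \<alpha>)) (snd (c ((\<alpha>+t) mod (2*t+1)))) = k + 1)"

definition Dset :: "nat \<Rightarrow> nat \<Rightarrow> nat \<Rightarrow> (nat \<Rightarrow> cel \<times> cel) \<Rightarrow> (cel \<times> cel) set" where
  "Dset n k m c = {(x, y). (x, y) \<in> Inc n k \<and>
     (\<exists>\<alpha><m. circ_chain (n+k) [fst (c \<alpha>), x, y, snd (c \<alpha>)] [False, False, False])}"

end

theory Submission
  imports Defs
begin

text \<open>Rotate the circle so that positions become \<open>0, \<dots>, N - 1\<close> with \<open>N = n + k\<close>; a pair
  \<open>(a_i, b_j)\<close> of \<open>Inc(A,B)\<close> becomes the arc from \<open>i\<close> clockwise to \<open>j\<close>, of length at most \<open>k\<close>, and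
  two pairs are non-adjacent in \<open>G_n^k\<close> iff one arc reaches within \<open>k\<close> of the other's end.
  The disjoint 3-cycle together with \<open>N \<le> 3k\<close> confines every arc of \<open>S\<close> to one of three windows
  in which it does not wrap around. Hence overlapping arcs of \<open>S\<close> can be merged inside \<open>S\<close>, so the
  inclusion-maximal arcs of \<open>S\<close> are pairwise disjoint and \<open>S\<close> consists of all their subarcs.
  Maximality of \<open>S\<close> matches every maximal arc starting at \<open>a\<close> with a maximal arc ending at
  \<open>a + k\<close>, and every one ending at \<open>b\<close> with one starting at \<open>b - k\<close>. Ordering the maximal arcs
  clockwise, \<open>a \<mapsto> a + k\<close> then shifts their ranks by a constant \<open>t\<close>, so whether one arc reaches
  another depends only on their rank difference. Of two distinct maximal arcs exactly one reaches
  the other, which forces \<open>2t + 1\<close> maximal arcs; in clockwise order they form \<open>C_0\<close>.\<close>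

section \<open>Arcs on a circle of \<open>N\<close> points\<close>

definition cw_dist :: "int \<Rightarrow> int \<Rightarrow> int \<Rightarrow> int" where
  "cw_dist N a b = (if a \<le> b then b - a else N + b - a)"

text \<open>For pairs of \<open>Inc(A,B)\<close> in rotated coordinates this is non-adjacency in \<open>G_n^k\<close>.\<close>
definition arcs_compatible :: "int \<Rightarrow> int \<Rightarrow> int \<times> int \<Rightarrow> int \<times> int \<Rightarrow> bool" where
  "arcs_compatible N k p q \<longleftrightarrow> cw_dist N (fst p) (snd q) \<le> k \<or> cw_dist N (fst q) (snd p) \<le> k"

lemma cw_dist_boundary_end:
  fixes N k a d :: int
  assumes "0 \<le> a" "a < N" "0 \<le> d" "d < N" "0 \<le> k" "k < N" "cw_dist N a d \<le> k"
    and "cw_dist N (if a = 0 then N - 1 else a - 1) d > k"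
  shows "d = (if a + k < N then a + k else a + k - N)"
  using assms unfolding cw_dist_def by (smt (z3))

lemma cw_dist_boundary_start:
  fixes N k b c :: int
  assumes "0 \<le> b" "b < N" "0 \<le> c" "c < N" "0 \<le> k" "k < N" "cw_dist N c b \<le> k"
    and "cw_dist N c (if b = N - 1 then 0 else b + 1) > k"
  shows "c = (if k \<le> b then b - k else b + N - k)"
  using assms unfolding cw_dist_def by (smt (z3))

lemma mod_diff_eq_cases:
  fixes x y m :: nat
  assumes "x < m" "y < m"
  shows "(y + m - x) mod m = (if x \<le> y then y - x else y + m - x)"
proof (cases "x \<le> y")
  case True
  then have "y + m - x = (y - x) + m" by simp
  then have "(y + m - x) mod m = (y - x) mod m" by (metis mod_add_self2)
  then show ?thesis using True assms by simp
next
  case False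
  then have "y + m - x < m" using assms by arith
  then show ?thesis using False by simp
qed

lemma mod_diff_pred:
  fixes \<alpha> m :: nat
  assumes "\<alpha> < m" "2 \<le> m"
  shows "((\<alpha> + (m - 1)) mod m + m - \<alpha>) mod m = m - 1"
proof (cases "\<alpha> = 0")
  case True
  then show ?thesis using mod_diff_eq_cases[of 0 m "m - 1"] assms by simp
next
  case False
  have "\<alpha> + (m - 1) = (\<alpha> - 1) + m" using False assms by arith
  then have "(\<alpha> + (m - 1)) mod m = ((\<alpha> - 1) + m) mod m" by (simp only:)
  also have "\<dots> = \<alpha> - 1" using assms by (simp only: mod_add_self2 mod_less)
  finally have "(\<alpha> + (m - 1)) mod m = \<alpha> - 1" .
  moreover have "\<alpha> - 1 < m" "\<not> \<alpha> \<le> \<alpha> - 1" using assms False by auto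
  ultimately show ?thesis using mod_diff_eq_cases[of \<alpha> m "\<alpha> - 1"] assms False by simp
qed

text \<open>Test the pairs \<open>(0, 1)\<close>, \<open>(0, t)\<close> and \<open>(0, t + 1)\<close>.\<close>
lemma cyclic_tournament_size:
  fixes m t :: nat
  assumes m2: "2 \<le> m"
    and tour: "\<And>\<alpha> \<beta>. \<alpha> < m \<Longrightarrow> \<beta> < m \<Longrightarrow> \<alpha> \<noteq> \<beta> \<Longrightarrow>
        ((\<beta> + m - \<alpha>) mod m \<le> t) \<noteq> ((\<alpha> + m - \<beta>) mod m \<le> t)"
  shows "1 \<le> t \<and> m = 2*t + 1"
proof -
  have pair0: "(j \<le> t) \<noteq> (m - j \<le> t)" if "0 < j" "j < m" for j
    using tour[of 0 j] that mod_diff_eq_cases[of 0 m j] mod_diff_eq_cases[of j m 0] by simp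
  have t1: "1 \<le> t" and tm: "t < m" using pair0[of 1] m2 by linarith+
  have "\<not> m \<le> 2*t" using pair0[of t] t1 tm by linarith
  moreover have "\<not> 2*t + 2 \<le> m" using pair0[of "Suc t"] by linarith
  ultimately show ?thesis using t1 by linarith
qed

lemma arcs_compatible_subarcs:
  fixes N k A B C D a b c d :: int
  assumes "2*k < N" "0 \<le> A" "A \<le> a" "a \<le> b" "b \<le> B" "B < N" "B - A < k"
    "0 \<le> C" "C \<le> c" "c \<le> d" "d \<le> D" "D < N" "D - C < k"
    "(A = C \<and> B = D) \<or> B < C \<or> D < A" "arcs_compatible N k (A,B) (C,D)"
  shows "arcs_compatible N k (a,b) (c,d)"
  using assms unfolding arcs_compatible_def cw_dist_def fst_conv snd_conv by (smt (z3))

lemma cw_dist_subarc_iff: fixes N A B a b :: int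
  assumes "0 \<le> A" "A \<le> B" "B < N" "0 \<le> a" "a < N" "0 \<le> b" "b < N"
  shows "(cw_dist N A a \<le> cw_dist N A b \<and> cw_dist N A b \<le> cw_dist N A B) \<longleftrightarrow> (A \<le> a \<and> a \<le> b \<and> b \<le> B)"
  using assms unfolding cw_dist_def by auto

lemma arcs_compatible_commute: "arcs_compatible N k p q \<longleftrightarrow> arcs_compatible N k q p"
  unfolding arcs_compatible_def by auto

section \<open>Maximal compatible families of arcs containing a disjoint 3-cycle\<close>

text \<open>The Matching Conditions for the cycle \<open>f 0, \<dots>, f (2t)\<close> and \<open>T = D(C_0)\<close>, in rotated
  coordinates.\<close>
definition matching_arcs :: "int \<Rightarrow> int \<Rightarrow> (int \<times> int) set \<Rightarrow> nat \<Rightarrow> (nat \<Rightarrow> int \<times> int) \<Rightarrow> bool" where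
  "matching_arcs N k T t f \<longleftrightarrow>
     (\<forall>\<alpha><2*t+1. fst (f \<alpha>) \<le> snd (f \<alpha>))
   \<and> (\<forall>\<alpha> \<beta>. \<alpha> < \<beta> \<longrightarrow> \<beta> < 2*t+1 \<longrightarrow> snd (f \<alpha>) < fst (f \<beta>))
   \<and> (\<forall>\<alpha><2*t+1. cw_dist N (fst (f \<alpha>)) (snd (f ((\<alpha>+t) mod (2*t+1)))) = k)
   \<and> (\<forall>\<alpha><2*t+1. k < cw_dist N (fst (f \<alpha>)) (snd (f ((\<alpha>+2*t) mod (2*t+1)))))
   \<and> T = {(a,b). \<exists>\<alpha><2*t+1. fst (f \<alpha>) \<le> a \<and> a \<le> b \<and> b \<le> snd (f \<alpha>)}"

text \<open>A maximal independent set of \<open>G_n^k\<close> in coordinates rotated so that \<open>y_2\<close> of the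
  given 3-cycle sits at \<open>k\<close>: arcs \<open>(a, b)\<close> of clockwise length at most \<open>k\<close> on \<open>N = n + k\<close>
  points, pairwise compatible, and maximal with this property.\<close>
locale arc_cycle_family =
  fixes N k :: int and T :: "(int \<times> int) set" and a0 b0 a1 b1 a2 b2 :: int
  assumes size_bounds: "2*k < N" "N \<le> 3*k"
    and arc_bounds: "\<And>a b. (a,b) \<in> T \<Longrightarrow> 0 \<le> a \<and> a < N \<and> 0 \<le> b \<and> b < N \<and> cw_dist N a b \<le> k"
    and compatible: "\<And>p q. p \<in> T \<Longrightarrow> q \<in> T \<Longrightarrow> arcs_compatible N k p q"
    and maximal: "\<And>a b. 0 \<le> a \<Longrightarrow> a < N \<Longrightarrow> 0 \<le> b \<Longrightarrow> b < N \<Longrightarrow> cw_dist N a b \<le> k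
      \<Longrightarrow> (\<forall>q\<in>T. arcs_compatible N k (a,b) q) \<Longrightarrow> (a,b) \<in> T"
    and cycle_in: "(a0,b0) \<in> T" "(a1,b1) \<in> T" "(a2,b2) \<in> T"
    and b1_eq: "b1 = k"
    and cycle_order: "cw_dist N a0 b0 < cw_dist N a0 a1" "cw_dist N a0 a1 \<le> cw_dist N a0 b1"
      "cw_dist N a0 b1 < cw_dist N a0 a2" "cw_dist N a0 a2 \<le> cw_dist N a0 b2"
    and cycle_strict: "cw_dist N a0 b0 \<le> k" "cw_dist N a0 b1 \<le> k" "cw_dist N a0 b2 > k"
      "cw_dist N a1 b1 \<le> k" "cw_dist N a1 b2 \<le> k" "cw_dist N a1 b0 > k"
      "cw_dist N a2 b2 \<le> k" "cw_dist N a2 b0 \<le> k" "cw_dist N a2 b1 > k"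
begin

lemma cycle_layout:
  "0 \<le> a0 \<and> a0 \<le> b0 \<and> b0 + N \<le> a2 + k \<and> a2 + k < b2 + N - k \<and> b2 \<le> a1 + k \<and> a1 \<le> b1
     \<and> b1 \<le> a0 + k \<and> a0 + k < b0 + N - k \<and> a2 \<le> b2 \<and> a1 + k < N"
  using size_bounds arc_bounds[OF cycle_in(1)] arc_bounds[OF cycle_in(2)] arc_bounds[OF cycle_in(3)]
    b1_eq cycle_order cycle_strict
  unfolding cw_dist_def by (smt (z3))

definition in_window :: "int \<Rightarrow> int \<Rightarrow> bool" where
  "in_window a b \<longleftrightarrow> 0 \<le> a \<and> a \<le> b \<and>
     (b \<le> a2 + k - N \<or> (b2 - k \<le> a \<and> b \<le> a0 + k) \<or> (b0 + N - k \<le> a \<and> b \<le> a1 + k))"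

text \<open>An arc compatible with all three arcs of the cycle cannot wrap around, because \<open>N \<le> 3k\<close>.\<close>
lemma arc_in_window: assumes "(a,b) \<in> T" shows "in_window a b"
proof -
  have "arcs_compatible N k (a,b) (a0,b0)" "arcs_compatible N k (a,b) (a1,b1)"
    "arcs_compatible N k (a,b) (a2,b2)"
    using compatible assms cycle_in by auto
  then show ?thesis using arc_bounds[OF assms] cycle_layout size_bounds b1_eq cycle_strict
    unfolding in_window_def arcs_compatible_def cw_dist_def fst_conv snd_conv by (smt (z3))
qed

lemma in_window_bounds: "in_window a b \<Longrightarrow> b - a < k \<and> b < N"
  using cycle_layout size_bounds b1_eq unfolding in_window_def by linarith

definition subarc :: "int \<times> int \<Rightarrow> int \<times> int \<Rightarrow> bool" where
  "subarc p q \<longleftrightarrow> fst q \<le> fst p \<and> snd p \<le> snd q"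

definition max_arcs :: "(int \<times> int) set" where
  "max_arcs = {p \<in> T. \<forall>q\<in>T. subarc p q \<longrightarrow> q = p}"

lemma arcs_subset: "T \<subseteq> {0..<N} \<times> {0..<N}"
  using arc_bounds by fastforce

lemma finite_arcs: "finite T"
  using arcs_subset finite_subset by blast

lemma subarc_of_max_arc: assumes "p \<in> T" shows "\<exists>q\<in>max_arcs. subarc p q"
proof -
  let ?C = "{q\<in>T. subarc p q}"
  have fin: "finite ?C" using finite_arcs by simp
  have ne: "p \<in> ?C" using assms unfolding subarc_def by simp
  let ?L = "Max ((\<lambda>q. snd q - fst q) ` ?C)"
  have "?L \<in> (\<lambda>q. snd q - fst q) ` ?C" using fin ne by (intro Max_in finite_imageI) blast+
  then obtain q where q: "q \<in> ?C" "snd q - fst q = ?L" by auto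
  have "q \<in> max_arcs"
    unfolding max_arcs_def
  proof (intro CollectI conjI ballI impI)
    show "q \<in> T" using q by simp
    fix q' assume q': "q' \<in> T" "subarc q q'"
    then have "q' \<in> ?C" using q unfolding subarc_def by auto
    then have "snd q' - fst q' \<le> ?L" using fin by (intro Max_ge) auto
    then show "q' = q" using q' q unfolding subarc_def by (cases q, cases q') auto
  qed
  then show ?thesis using q by auto
qed

lemma max_arc_in: "p \<in> max_arcs \<Longrightarrow> p \<in> T" unfolding max_arcs_def by auto

lemma compatible_union:
  assumes "in_window a b" "in_window c d" "in_window e f" "c \<le> b" "a \<le> d"
    and "arcs_compatible N k (a,b) (e,f)" "arcs_compatible N k (c,d) (e,f)"
  shows "arcs_compatible N k (min a c, max b d) (e,f)"
  using assms cycle_layout size_bounds b1_eq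
  unfolding in_window_def arcs_compatible_def cw_dist_def fst_conv snd_conv by (smt (z3))

text \<open>Two overlapping arcs of \<open>T\<close> have a union compatible with all of \<open>T\<close>, hence in \<open>T\<close>.\<close>
lemma max_arcs_disjoint:
  assumes p: "p \<in> max_arcs" and q: "q \<in> max_arcs" and ne: "p \<noteq> q"
  shows "snd p < fst q \<or> snd q < fst p"
proof (rule ccontr)
  assume ov: "\<not> (snd p < fst q \<or> snd q < fst p)"
  obtain a b where pab: "p = (a,b)" by (cases p)
  obtain c d where qcd: "q = (c,d)" by (cases q)
  have pT: "(a,b) \<in> T" and qT: "(c,d) \<in> T" using p q max_arc_in pab qcd by auto
  have iM: "in_window a b" "in_window c d" using arc_in_window pT qT by auto
  have ov': "c \<le> b" "a \<le> d" using ov pab qcd by auto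
  let ?u = "(min a c, max b d)"
  have uT: "?u \<in> T"
  proof (rule maximal)
    show "0 \<le> min a c" "min a c < N" "0 \<le> max b d" "max b d < N" "cw_dist N (min a c) (max b d) \<le> k"
      using iM ov' cycle_layout size_bounds b1_eq unfolding in_window_def cw_dist_def by (smt (z3))+
    show "\<forall>qa\<in>T. arcs_compatible N k (min a c, max b d) qa"
    proof
      fix r assume rT: "r \<in> T"
      obtain e f where ref: "r = (e,f)" by (cases r)
      show "arcs_compatible N k (min a c, max b d) r"
        using compatible_union[OF iM arc_in_window[of e f] ov'] compatible[OF pT] compatible[OF qT] rT ref by auto
    qed
  qed
  have "?u = p" using p uT pab unfolding max_arcs_def subarc_def by auto
  moreover have "?u = q" using q uT qcd unfolding max_arcs_def subarc_def by auto
  ultimately show False using ne by simp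
qed

definition plus_k :: "int \<Rightarrow> int" where "plus_k a = (if a + k < N then a + k else a + k - N)"
definition minus_k :: "int \<Rightarrow> int" where "minus_k b = (if k \<le> b then b - k else b + N - k)"

text \<open>A maximal arc \<open>(a, b)\<close> shorter than \<open>k\<close> cannot be prolonged to \<open>a - 1\<close>, so by
  maximality of \<open>T\<close> some arc of \<open>T\<close> is incompatible with the prolongation; it ends exactly at \<open>a + k\<close>.\<close>
lemma left_extension_blocked:
  assumes p: "(a,b) \<in> max_arcs" and short: "b - a < k"
  obtains c where "(c, plus_k a) \<in> T" "k < cw_dist N c b"
proof -
  have pT: "(a,b) \<in> T" using p max_arc_in by auto
  have iM: "in_window a b" using arc_in_window pT by auto
  define a' where "a' = (if a = 0 then N - 1 else a - 1)"
  have nT: "(a',b) \<notin> T"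
  proof
    assume h: "(a',b) \<in> T"
    show False
    proof (cases "a = 0")
      case True
      then show ?thesis using arc_in_window[OF h] short iM size_bounds
        unfolding a'_def in_window_def by (smt (z3))
    next
      case False
      then have "subarc (a,b) (a',b)" "(a',b) \<noteq> (a,b)" using iM
        unfolding a'_def subarc_def in_window_def by auto
      then show ?thesis using p h unfolding max_arcs_def by auto
    qed
  qed
  have "\<not> (\<forall>q\<in>T. arcs_compatible N k (a',b) q)"
  proof
    assume "\<forall>q\<in>T. arcs_compatible N k (a', b) q"
    moreover have "0 \<le> a'" "a' < N" "0 \<le> b" "b < N" "cw_dist N a' b \<le> k"
      using iM in_window_bounds[OF iM] short size_bounds unfolding a'_def in_window_def cw_dist_def
        by (smt (z3))+
    ultimately show False using maximal nT by blast
  qed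
  then obtain c d where rT: "(c,d) \<in> T" and ncp: "\<not> arcs_compatible N k (a',b) (c,d)" by auto
  have far: "k < cw_dist N c b" and "k < cw_dist N a' d" using ncp unfolding arcs_compatible_def by auto
  moreover have "cw_dist N a d \<le> k" using compatible[OF pT rT] far unfolding arcs_compatible_def by auto
  ultimately have "d = plus_k a" unfolding plus_k_def
    using cw_dist_boundary_end[of a N d k] arc_bounds[OF rT] iM in_window_bounds[OF iM] size_bounds
    unfolding a'_def in_window_def by linarith
  then show ?thesis using that rT far by simp
qed

lemma right_extension_blocked:
  assumes p: "(a,b) \<in> max_arcs" and short: "b - a < k"
  obtains d where "(minus_k b, d) \<in> T" "k < cw_dist N a d"
proof -
  have pT: "(a,b) \<in> T" using p max_arc_in by auto
  have iM: "in_window a b" using arc_in_window pT by auto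
  define b' where "b' = (if b = N - 1 then 0 else b + 1)"
  have nT: "(a,b') \<notin> T"
  proof
    assume h: "(a,b') \<in> T"
    show False
    proof (cases "b = N - 1")
      case True
      then show ?thesis using arc_in_window[OF h] short iM size_bounds
        unfolding b'_def in_window_def by (smt (z3))
    next
      case False
      then have "subarc (a,b) (a,b')" "(a,b') \<noteq> (a,b)" using iM
        unfolding b'_def subarc_def in_window_def by auto
      then show ?thesis using p h unfolding max_arcs_def by auto
    qed
  qed
  have "\<not> (\<forall>q\<in>T. arcs_compatible N k (a,b') q)"
  proof
    assume "\<forall>q\<in>T. arcs_compatible N k (a, b') q"
    moreover have "0 \<le> a" "a < N" "0 \<le> b'" "b' < N" "cw_dist N a b' \<le> k"
      using iM in_window_bounds[OF iM] short size_bounds unfolding b'_def in_window_def cw_dist_def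
        by (smt (z3))+
    ultimately show False using maximal nT by blast
  qed
  then obtain c d where rT: "(c,d) \<in> T" and ncp: "\<not> arcs_compatible N k (a,b') (c,d)" by auto
  have far: "k < cw_dist N a d" and "k < cw_dist N c b'" using ncp unfolding arcs_compatible_def by auto
  moreover have "cw_dist N c b \<le> k" using compatible[OF pT rT] far unfolding arcs_compatible_def by auto
  ultimately have "c = minus_k b" unfolding minus_k_def
    using cw_dist_boundary_start[of b N c k] arc_bounds[OF rT] iM in_window_bounds[OF iM] size_bounds
    unfolding b'_def in_window_def by linarith
  then show ?thesis using that rT far by simp
qed

lemma max_arc_ending_at_plus_k:
  assumes p: "(a,b) \<in> max_arcs" shows "\<exists>q\<in>max_arcs. snd q = plus_k a"
proof (cases "b - a = k")
  case True
  then show ?thesis using p arc_bounds[OF max_arc_in[OF p]] unfolding plus_k_def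
    by (intro bexI[of _ "(a,b)"]) auto
next
  case False
  have pT: "(a,b) \<in> T" using p max_arc_in by auto
  have iM: "in_window a b" using arc_in_window pT by auto
  have short: "b - a < k" using False iM in_window_bounds unfolding in_window_def by (smt (z3))
  obtain c where cT: "(c, plus_k a) \<in> T" and far: "k < cw_dist N c b"
    using left_extension_blocked[OF p short] .
  obtain J where J: "J \<in> max_arcs" "subarc (c, plus_k a) J" using subarc_of_max_arc cT by blast
  obtain c' d' where Jcd: "J = (c',d')" by (cases J)
  have JT: "(c',d') \<in> T" using J Jcd max_arc_in by auto
  have iMr: "in_window c (plus_k a)" using arc_in_window cT by auto
  have "J \<noteq> (a,b)"
  proof
    assume "J = (a,b)"
    then have "a \<le> c" "plus_k a \<le> b" using J Jcd unfolding subarc_def by auto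
    then show False using far iMr short unfolding cw_dist_def in_window_def by auto
  qed
  then have "d' < a \<or> b < c'" using max_arcs_disjoint[OF J(1) p] Jcd by auto
  moreover have "arcs_compatible N k (a,b) (c',d')" using compatible pT JT by auto
  moreover have "c' \<le> c" "plus_k a \<le> d'" using J Jcd unfolding subarc_def by auto
  ultimately have "d' = plus_k a"
    using far iMr iM arc_in_window[OF JT] short size_bounds
    unfolding plus_k_def arcs_compatible_def cw_dist_def in_window_def fst_conv snd_conv by (smt (z3))
  then show ?thesis using J Jcd by (intro bexI[of _ J]) auto
qed

lemma max_arc_starting_at_minus_k:
  assumes p: "(a,b) \<in> max_arcs" shows "\<exists>q\<in>max_arcs. fst q = minus_k b"
proof (cases "b - a = k")
  case True
  then show ?thesis using p arc_bounds[OF max_arc_in[OF p]] unfolding minus_k_def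
    by (intro bexI[of _ "(a,b)"]) auto
next
  case False
  have pT: "(a,b) \<in> T" using p max_arc_in by auto
  have iM: "in_window a b" using arc_in_window pT by auto
  have short: "b - a < k" using False iM in_window_bounds unfolding in_window_def by (smt (z3))
  obtain d where dT: "(minus_k b, d) \<in> T" and far: "k < cw_dist N a d"
    using right_extension_blocked[OF p short] .
  obtain J where J: "J \<in> max_arcs" "subarc (minus_k b, d) J" using subarc_of_max_arc dT by blast
  obtain c' d' where Jcd: "J = (c',d')" by (cases J)
  have JT: "(c',d') \<in> T" using J Jcd max_arc_in by auto
  have iMr: "in_window (minus_k b) d" using arc_in_window dT by auto
  have "J \<noteq> (a,b)"
  proof
    assume "J = (a,b)"
    then have "a \<le> minus_k b" "d \<le> b" using J Jcd unfolding subarc_def by auto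
    then show False using far iMr short unfolding cw_dist_def in_window_def by auto
  qed
  then have "d' < a \<or> b < c'" using max_arcs_disjoint[OF J(1) p] Jcd by auto
  moreover have "arcs_compatible N k (a,b) (c',d')" using compatible pT JT by auto
  moreover have "c' \<le> minus_k b" "d \<le> d'" using J Jcd unfolding subarc_def by auto
  ultimately have "c' = minus_k b"
    using far iMr iM arc_in_window[OF JT] short size_bounds
    unfolding minus_k_def arcs_compatible_def cw_dist_def in_window_def fst_conv snd_conv by (smt (z3))
  then show ?thesis using J Jcd by (intro bexI[of _ J]) auto
qed

definition starts :: "int set" where "starts = fst ` max_arcs"
definition ends :: "int set" where "ends = snd ` max_arcs"
definition end_of :: "int \<Rightarrow> int" where "end_of a = (THE b. (a,b) \<in> max_arcs)"
definition start_of :: "int \<Rightarrow> int" where "start_of b = (THE a. (a,b) \<in> max_arcs)"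

lemma max_arc_in_window: "(a,b) \<in> max_arcs \<Longrightarrow> in_window a b"
  using arc_in_window max_arc_in by blast

lemma max_arc_end_unique: assumes "(a,b) \<in> max_arcs" "(a,b') \<in> max_arcs" shows "b = b'"
proof (rule ccontr)
  assume "b \<noteq> b'"
  then have "b < a \<or> b' < a" using max_arcs_disjoint[OF assms] by auto
  then show False
    using max_arc_in_window[OF assms(1)] max_arc_in_window[OF assms(2)] unfolding in_window_def by auto
qed

lemma max_arc_start_unique: assumes "(a,b) \<in> max_arcs" "(a',b) \<in> max_arcs" shows "a = a'"
proof (rule ccontr)
  assume "a \<noteq> a'"
  then have "b < a' \<or> b < a" using max_arcs_disjoint[OF assms] by auto
  then show False
    using max_arc_in_window[OF assms(1)] max_arc_in_window[OF assms(2)] unfolding in_window_def by auto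
qed

lemma end_of_max_arc: assumes "a \<in> starts" shows "(a, end_of a) \<in> max_arcs"
proof -
  obtain b where b: "(a,b) \<in> max_arcs" using assms unfolding starts_def by force
  have "end_of a = b" unfolding end_of_def using b max_arc_end_unique by blast
  then show ?thesis using b by simp
qed

lemma end_of_eq: "(a,b) \<in> max_arcs \<Longrightarrow> end_of a = b"
  unfolding end_of_def using max_arc_end_unique by blast

lemma start_of_max_arc: assumes "b \<in> ends" shows "(start_of b, b) \<in> max_arcs"
proof -
  obtain a where a: "(a,b) \<in> max_arcs" using assms unfolding ends_def by force
  have "start_of b = a" unfolding start_of_def using a max_arc_start_unique by blast
  then show ?thesis using a by simp
qed

lemma start_end_bounds: "a \<in> starts \<Longrightarrow> 0 \<le> a \<and> a \<le> end_of a \<and> end_of a < N \<and> end_of a - a < k"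
  using max_arc_in_window[OF end_of_max_arc] in_window_bounds[OF max_arc_in_window[OF end_of_max_arc]]
  unfolding in_window_def by auto

lemma end_of_less_start: assumes "a \<in> starts" "a' \<in> starts" "a < a'" shows "end_of a < a'"
proof -
  have "(a, end_of a) \<noteq> (a', end_of a')" using assms by auto
  then have "end_of a < a' \<or> end_of a' < a"
    using max_arcs_disjoint[OF end_of_max_arc[OF assms(1)] end_of_max_arc[OF assms(2)]] by auto
  then show ?thesis using start_end_bounds[OF assms(2)] assms by auto
qed

lemma end_of_less_iff: assumes "a \<in> starts" "a' \<in> starts" shows "(end_of a < end_of a') = (a < a')"
proof (cases a a' rule: linorder_cases)
  case less
  then show ?thesis using end_of_less_start[OF assms less] start_end_bounds[OF assms(2)] by auto
next
  case equal
  then show ?thesis by simp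
next
  case greater
  then show ?thesis using end_of_less_start[OF assms(2,1) greater] start_end_bounds[OF assms(1)] by auto
qed

lemma inj_on_end_of: "inj_on end_of starts"
  by (smt (verit) end_of_less_iff inj_onI)

lemma end_of_image: "end_of ` starts = ends"
proof
  show "end_of ` starts \<subseteq> ends" using end_of_max_arc unfolding ends_def by force
  show "ends \<subseteq> end_of ` starts"
  proof
    fix b assume "b \<in> ends"
    then have "(start_of b, b) \<in> max_arcs" by (rule start_of_max_arc)
    then show "b \<in> end_of ` starts" unfolding starts_def using end_of_eq by force
  qed
qed

lemma plus_k_end: "a \<in> starts \<Longrightarrow> plus_k a \<in> ends"
  using max_arc_ending_at_plus_k[OF end_of_max_arc] unfolding ends_def by force

lemma minus_k_start: "b \<in> ends \<Longrightarrow> minus_k b \<in> starts"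
  using max_arc_starting_at_minus_k[OF start_of_max_arc] unfolding starts_def by force

lemma end_bounds: "b \<in> ends \<Longrightarrow> 0 \<le> b \<and> b < N"
  using start_of_max_arc max_arc_in_window in_window_bounds unfolding in_window_def by fastforce

lemma start_bounds: "a \<in> starts \<Longrightarrow> 0 \<le> a \<and> a < N"
  using start_end_bounds by fastforce

lemma plus_k_minus_k: "0 \<le> b \<Longrightarrow> b < N \<Longrightarrow> plus_k (minus_k b) = b"
  unfolding plus_k_def minus_k_def using size_bounds by auto

lemma inj_on_plus_k: "inj_on plus_k starts"
proof (rule inj_onI)
  fix x y assume "x \<in> starts" "y \<in> starts" "plus_k x = plus_k y"
  then show "x = y"
    using start_bounds[of x] start_bounds[of y] size_bounds unfolding plus_k_def
      by (auto split: if_splits)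
qed

lemma plus_k_image: "plus_k ` starts = ends"
proof
  show "plus_k ` starts \<subseteq> ends" using plus_k_end by auto
  show "ends \<subseteq> plus_k ` starts"
  proof
    fix b assume b: "b \<in> ends"
    then have "plus_k (minus_k b) = b" using end_bounds plus_k_minus_k by auto
    then show "b \<in> plus_k ` starts" using minus_k_start[OF b] by force
  qed
qed

lemma finite_starts: "finite starts"
  unfolding starts_def max_arcs_def using finite_arcs by auto

definition arc_count :: nat where "arc_count = card starts"
definition rank :: "int \<Rightarrow> nat" where "rank a = card {s\<in>starts. s < a}"
definition shift :: nat where "shift = card {s\<in>starts. N - k \<le> s}"

lemma rank_less: assumes "a \<in> starts" "b \<in> starts" "a < b" shows "rank a < rank b"
proof -
  have "{s\<in>starts. s < a} \<subset> {s\<in>starts. s < b}" using assms by auto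
  then show ?thesis unfolding rank_def by (intro psubset_card_mono) (use finite_starts in auto)
qed

lemma rank_le_iff: assumes "a \<in> starts" "b \<in> starts" shows "(rank a \<le> rank b) = (a \<le> b)"
proof (cases a b rule: linorder_cases)
  case less then show ?thesis using rank_less[OF assms less] by simp
next
  case equal then show ?thesis by simp
next
  case greater then show ?thesis using rank_less[OF assms(2,1) greater] by simp
qed

lemma rank_less_count: assumes "a \<in> starts" shows "rank a < arc_count"
proof -
  have "{s\<in>starts. s < a} \<subset> starts" using assms by auto
  then show ?thesis unfolding rank_def arc_count_def
    by (intro psubset_card_mono) (use finite_starts in auto)
qed

lemma inj_on_rank: "inj_on rank starts"
  by (rule inj_onI) (metis rank_less less_irrefl linorder_neqE)

lemma rank_image: "rank ` starts = {..<arc_count}"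
proof -
  have "rank ` starts \<subseteq> {..<arc_count}" using rank_less_count by auto
  moreover have "card (rank ` starts) = card {..<arc_count}"
    using card_image[OF inj_on_rank] arc_count_def by simp
  ultimately show ?thesis using card_subset_eq[of "{..<arc_count}" "rank ` starts"] by simp
qed

definition nth_start :: "nat \<Rightarrow> int" where "nth_start \<alpha> = the_inv_into starts rank \<alpha>"

lemma nth_start_in: "\<alpha> < arc_count \<Longrightarrow> nth_start \<alpha> \<in> starts"
  unfolding nth_start_def using rank_image inj_on_rank
    by (metis lessThan_iff the_inv_into_into order_refl)

lemma rank_nth_start: "\<alpha> < arc_count \<Longrightarrow> rank (nth_start \<alpha>) = \<alpha>"
  unfolding nth_start_def using rank_image inj_on_rank by (metis f_the_inv_into_f lessThan_iff)

lemma nth_start_rank: "a \<in> starts \<Longrightarrow> nth_start (rank a) = a"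
  unfolding nth_start_def using inj_on_rank by (simp add: the_inv_into_f_f)

lemma card_end_of_less: "card {s\<in>starts. end_of s < v} = card {e\<in>ends. e < v}"
proof -
  have "end_of ` {s\<in>starts. end_of s < v} = {e\<in>ends. e < v}" using end_of_image by auto
  moreover have "inj_on end_of {s\<in>starts. end_of s < v}" using inj_on_end_of by (rule inj_on_subset) auto
  ultimately show ?thesis using card_image[of end_of "{s\<in>starts. end_of s < v}"] by simp
qed

lemma card_plus_k_less: "card {s\<in>starts. plus_k s < v} = card {e\<in>ends. e < v}"
proof -
  have "plus_k ` {s\<in>starts. plus_k s < v} = {e\<in>ends. e < v}" using plus_k_image by auto
  moreover have "inj_on plus_k {s\<in>starts. plus_k s < v}" using inj_on_plus_k by (rule inj_on_subset) auto
  ultimately show ?thesis using card_image[of plus_k "{s\<in>starts. plus_k s < v}"] by simp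
qed

definition partner :: "int \<Rightarrow> int" where "partner a = start_of (plus_k a)"

lemma partner_start: "a \<in> starts \<Longrightarrow> partner a \<in> starts \<and> end_of (partner a) = plus_k a"
  unfolding partner_def using start_of_max_arc[OF plus_k_end] end_of_eq unfolding starts_def by force

lemma rank_partner_card:
  assumes a: "a \<in> starts" shows "rank (partner a) = card {s\<in>starts. plus_k s < plus_k a}"
proof -
  have "rank (partner a) = card {s\<in>starts. s < partner a}" unfolding rank_def by simp
  also have "{s\<in>starts. s < partner a} = {s\<in>starts. end_of s < end_of (partner a)}"
    using end_of_less_iff[of _ "partner a"] partner_start[OF a] by auto
  also have "card \<dots> = card {e\<in>ends. e < end_of (partner a)}" by (rule card_end_of_less)
  also have "\<dots> = card {s\<in>starts. plus_k s < plus_k a}" using card_plus_k_less partner_start[OF a] by simp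
  finally show ?thesis .
qed

lemma card_low_starts: "card {s\<in>starts. s < N - k} + shift = arc_count"
proof -
  have "starts = {s\<in>starts. s < N - k} \<union> {s\<in>starts. N - k \<le> s}" by auto
  moreover have "{s\<in>starts. s < N - k} \<inter> {s\<in>starts. N - k \<le> s} = {}" by auto
  ultimately show ?thesis unfolding shift_def arc_count_def using finite_starts
    by (metis (no_types, lifting) card_Un_disjoint finite_Un)
qed

lemma rank_partner_no_wrap:
  assumes a: "a \<in> starts" and True: "a + k < N" shows "rank (partner a) = rank a + shift"
proof -
  have "{s\<in>starts. plus_k s < plus_k a} = {s\<in>starts. s < a} \<union> {s\<in>starts. N - k \<le> s}"
  proof (rule set_eqI)
    fix x show "(x \<in> {s\<in>starts. plus_k s < plus_k a}) = (x \<in> {s\<in>starts. s < a} \<union> {s\<in>starts. N - k \<le> s})"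
      using True start_bounds[of x] start_bounds[OF a] size_bounds unfolding plus_k_def by auto
  qed
  moreover have "{s\<in>starts. s < a} \<inter> {s\<in>starts. N - k \<le> s} = {}" using True by auto
  ultimately have "card {s\<in>starts. plus_k s < plus_k a} = rank a + shift" unfolding rank_def shift_def
    using finite_starts by (simp add: card_Un_disjoint)
  then show "rank (partner a) = rank a + shift" using rank_partner_card[OF a] by simp
qed

lemma rank_partner_wrap: assumes a: "a \<in> starts" and False: "\<not> a + k < N"
  shows "rank (partner a) = rank a + shift - arc_count \<and> arc_count \<le> rank a + shift"
proof -
  have "{s\<in>starts. plus_k s < plus_k a} = {s\<in>starts. s < a} - {s\<in>starts. s < N - k}"
  proof (rule set_eqI)
    fix x show "(x \<in> {s\<in>starts. plus_k s < plus_k a}) = (x \<in> {s\<in>starts. s < a} - {s\<in>starts. s < N - k})"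
      using False start_bounds[of x] start_bounds[OF a] size_bounds unfolding plus_k_def by auto
  qed
  moreover have sub: "{s\<in>starts. s < N - k} \<subseteq> {s\<in>starts. s < a}" using False by auto
  ultimately have "card {s\<in>starts. plus_k s < plus_k a} = rank a - card {s\<in>starts. s < N - k}"
    unfolding rank_def
    using finite_starts by (simp add: card_Diff_subset)
  then have "rank (partner a) = rank a - card {s\<in>starts. s < N - k}" using rank_partner_card[OF a]
    by simp
  moreover have "card {s\<in>starts. s < N - k} \<le> rank a" unfolding rank_def
    using sub finite_starts by (intro card_mono) auto
  ultimately show ?thesis using card_low_starts by auto
qed

text \<open>Since \<open>plus_k\<close> is monotone on starts below \<open>N - k\<close> and on those above, and sends the
  latter below the former, passing to the partner advances the rank by exactly \<open>shift\<close>.\<close>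
lemma rank_partner: assumes a: "a \<in> starts" shows "rank (partner a) = (rank a + shift) mod arc_count"
proof (cases "a + k < N")
  case True
  then have "rank (partner a) = rank a + shift" by (rule rank_partner_no_wrap[OF a])
  moreover have "rank (partner a) < arc_count" using rank_less_count partner_start[OF a] by auto
  ultimately show ?thesis by simp
next
  case False
  then have h: "rank (partner a) = rank a + shift - arc_count" "arc_count \<le> rank a + shift"
    using rank_partner_wrap[OF a] by auto
  moreover have "rank (partner a) < arc_count" using rank_less_count partner_start[OF a] by auto
  moreover have "(rank a + shift) mod arc_count = (rank a + shift - arc_count) mod arc_count"
    using le_mod_geq[OF h(2)] .
  ultimately show ?thesis by simp
qed

lemma le_end_of_iff: assumes "a \<in> starts" "b \<in> starts" shows "(a \<le> end_of b) = (a \<le> b)"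
  using end_of_less_start[OF assms(2,1)] start_end_bounds[OF assms(2)] by (cases "b < a") auto

lemma reaches_iff_rank_diff: assumes a: "a \<in> starts" and b: "b \<in> starts"
  shows "(cw_dist N a (end_of b) \<le> k) = ((rank b + arc_count - rank a) mod arc_count \<le> shift)"
proof -
  have gS: "partner a \<in> starts" and Eg: "end_of (partner a) = plus_k a" using partner_start[OF a] by auto
  have rg: "rank (partner a) = (rank a + shift) mod arc_count" using rank_partner[OF a] .
  have ra: "rank a < arc_count" and rb: "rank b < arc_count" using rank_less_count a b by auto
  have ms: "(rank b + arc_count - rank a) mod arc_count
      = (if rank a \<le> rank b then rank b - rank a else rank b + arc_count - rank a)"
    using mod_diff_eq_cases ra rb by blast
  have ab: "(rank a \<le> rank b) = (a \<le> b)" using rank_le_iff a b by blast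
  have bg: "(rank b \<le> rank (partner a)) = (b \<le> partner a)" using rank_le_iff b gS by blast
  have Ebg: "(end_of b \<le> end_of (partner a)) = (b \<le> partner a)" using end_of_less_iff[OF gS b]
    by (metis not_less)
  have aEb: "(a \<le> end_of b) = (a \<le> b)" using le_end_of_iff a b by blast
  have rEb: "0 \<le> end_of b \<and> end_of b < N" using start_end_bounds[OF b] start_bounds[OF b] by auto
  have ra0: "0 \<le> a \<and> a < N" using start_bounds[OF a] .
  show ?thesis
  proof (cases "a + k < N")
    case True
    then have sa: "plus_k a = a + k" unfolding plus_k_def by simp
    have rg': "rank (partner a) = rank a + shift" using rank_partner_no_wrap[OF a True] .
    then have "rank a + shift < arc_count" using rank_less_count[OF gS] by simp
    have "(cw_dist N a (end_of b) \<le> k) = (a \<le> end_of b \<and> end_of b \<le> a + k)"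
      using rEb ra0 True size_bounds unfolding cw_dist_def by auto
    also have "\<dots> = (a \<le> b \<and> b \<le> partner a)" using aEb Ebg Eg sa by simp
    also have "\<dots> = (rank a \<le> rank b \<and> rank b \<le> rank a + shift)" using ab bg rg' by simp
    also have "\<dots> = ((rank b + arc_count - rank a) mod arc_count \<le> shift)" unfolding ms
      using \<open>rank a + shift < arc_count\<close> rb by auto
    finally show ?thesis .
  next
    case False
    then have sa: "plus_k a = a + k - N" unfolding plus_k_def by simp
    have rg': "rank (partner a) = rank a + shift - arc_count" and "arc_count \<le> rank a + shift"
      using rank_partner_wrap[OF a False] by auto
    have "(cw_dist N a (end_of b) \<le> k) = (a \<le> end_of b \<or> end_of b \<le> a + k - N)"
      using rEb ra0 False size_bounds unfolding cw_dist_def by auto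
    also have "\<dots> = (a \<le> b \<or> b \<le> partner a)" using aEb Ebg Eg sa by simp
    also have "\<dots> = (rank a \<le> rank b \<or> rank b \<le> rank a + shift - arc_count)" using ab bg rg' by simp
    also have "\<dots> = ((rank b + arc_count - rank a) mod arc_count \<le> shift)" unfolding ms
      using \<open>arc_count \<le> rank a + shift\<close> ra rb by auto
    finally show ?thesis .
  qed
qed

lemma not_mutually_reaching: assumes a: "a \<in> starts" and b: "b \<in> starts" and ne: "a \<noteq> b"
  shows "\<not> (cw_dist N a (end_of b) \<le> k \<and> cw_dist N b (end_of a) \<le> k)"
proof -
  have "(a, end_of a) \<noteq> (b, end_of b)" using ne by simp
  then have dj: "end_of a < b \<or> end_of b < a"
    using max_arcs_disjoint[OF end_of_max_arc[OF a] end_of_max_arc[OF b]] by simp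
  show ?thesis using dj start_end_bounds[OF a] start_end_bounds[OF b] size_bounds
    unfolding cw_dist_def by (smt (z3))
qed

lemma compatible_max_arcs: assumes a: "a \<in> starts" and b: "b \<in> starts"
  shows "cw_dist N a (end_of b) \<le> k \<or> cw_dist N b (end_of a) \<le> k"
  using compatible[OF max_arc_in[OF end_of_max_arc[OF a]] max_arc_in[OF end_of_max_arc[OF b]]]
    unfolding arcs_compatible_def by auto

lemma two_le_arc_count: "2 \<le> arc_count"
proof -
  obtain J0 where J0: "J0 \<in> max_arcs" "subarc (a0,b0) J0" using subarc_of_max_arc cycle_in(1) by blast
  obtain J1 where J1: "J1 \<in> max_arcs" "subarc (a1,b1) J1" using subarc_of_max_arc cycle_in(2) by blast
  obtain c0 d0 where J0e: "J0 = (c0,d0)" by (cases J0)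
  obtain c1 d1 where J1e: "J1 = (c1,d1)" by (cases J1)
  have i0: "in_window c0 d0" using max_arc_in_window J0 J0e by simp
  have ct0: "c0 \<le> a0" "b0 \<le> d0" using J0(2) J0e unfolding subarc_def by auto
  have ct1: "c1 \<le> a1" "b1 \<le> d1" using J1(2) J1e unfolding subarc_def by auto
  have ne: "c0 \<noteq> c1"
  proof
    assume h: "c0 = c1"
    then have "d0 = d1" using max_arc_end_unique J0 J1 J0e J1e by auto
    have "c0 \<le> a0" "a0 \<le> b0" "b0 + N \<le> a2 + k" "a2 + k < b2 + N - k" "b2 \<le> a1 + k" "a1 \<le> k" "k \<le> d0"
      using ct0 ct1 cycle_layout b1_eq \<open>d0 = d1\<close> by auto
    moreover have "d0 \<le> a2 + k - N \<or> (b2 - k \<le> c0 \<and> d0 \<le> a0 + k) \<or> (b0 + N - k \<le> c0 \<and> d0 \<le> a1 + k)"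
      using i0 unfolding in_window_def by auto
    ultimately show False using size_bounds by linarith
  qed
  moreover have "c0 \<in> starts" "c1 \<in> starts" using J0 J1 J0e J1e unfolding starts_def by force+
  ultimately have "card {c0, c1} \<le> arc_count" unfolding arc_count_def using finite_starts
    by (intro card_mono) auto
  then show ?thesis using ne by simp
qed

text \<open>By compatibility exactly one of two distinct maximal arcs reaches the end of the other.\<close>
lemma arc_count_eq: "1 \<le> shift \<and> arc_count = 2*shift + 1"
proof (rule cyclic_tournament_size[OF two_le_arc_count])
  fix \<alpha> \<beta> assume h: "\<alpha> < arc_count" "\<beta> < arc_count" "\<alpha> \<noteq> \<beta>"
  let ?a = "nth_start \<alpha>" and ?b = "nth_start \<beta>"
  have S: "?a \<in> starts" "?b \<in> starts" using nth_start_in h by auto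
  have r: "rank ?a = \<alpha>" "rank ?b = \<beta>" using rank_nth_start h by auto
  have ne: "?a \<noteq> ?b" using r h by metis
  have w1: "(cw_dist N ?a (end_of ?b) \<le> k) = ((\<beta> + arc_count - \<alpha>) mod arc_count \<le> shift)"
    using reaches_iff_rank_diff[OF S(1) S(2)] r by simp
  have w2: "(cw_dist N ?b (end_of ?a) \<le> k) = ((\<alpha> + arc_count - \<beta>) mod arc_count \<le> shift)"
    using reaches_iff_rank_diff[OF S(2) S(1)] r by simp
  show "((\<beta> + arc_count - \<alpha>) mod arc_count \<le> shift) \<noteq> ((\<alpha> + arc_count - \<beta>) mod arc_count \<le> shift)"
    using not_mutually_reaching[OF S ne] compatible_max_arcs[OF S] unfolding w1 w2 by blast
qed

lemma nth_start_strict_mono: assumes "\<alpha> < \<beta>" "\<beta> < arc_count" shows "nth_start \<alpha> < nth_start \<beta>"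
proof (rule ccontr)
  assume "\<not> nth_start \<alpha> < nth_start \<beta>"
  then have "nth_start \<beta> \<le> nth_start \<alpha>" by simp
  then have "rank (nth_start \<beta>) \<le> rank (nth_start \<alpha>)" using rank_le_iff nth_start_in assms by simp
  then show False using rank_nth_start assms by simp
qed

definition nth_arc :: "nat \<Rightarrow> int \<times> int" where
  "nth_arc \<alpha> = (nth_start \<alpha>, end_of (nth_start \<alpha>))"

lemma nth_arc_reaches_ahead:
  assumes "\<alpha> < arc_count"
  shows "cw_dist N (fst (nth_arc \<alpha>)) (snd (nth_arc ((\<alpha> + shift) mod arc_count))) = k"
proof -
  let ?a = "nth_start \<alpha>"
  have aS: "?a \<in> starts" using nth_start_in assms by simp
  have "rank (partner ?a) = (\<alpha> + shift) mod arc_count"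
    using rank_partner[OF aS] rank_nth_start assms by simp
  then have "nth_start ((\<alpha> + shift) mod arc_count) = partner ?a"
    using nth_start_rank partner_start[OF aS] by metis
  then have "end_of (nth_start ((\<alpha> + shift) mod arc_count)) = plus_k ?a" using partner_start[OF aS]
    by simp
  moreover have "cw_dist N ?a (plus_k ?a) = k"
    using start_bounds[OF aS] size_bounds unfolding plus_k_def cw_dist_def by auto
  ultimately show ?thesis unfolding nth_arc_def by simp
qed

lemma nth_arc_not_reaching_pred:
  assumes "\<alpha> < arc_count"
  shows "k < cw_dist N (fst (nth_arc \<alpha>)) (snd (nth_arc ((\<alpha> + (arc_count - 1)) mod arc_count)))"
proof -
  let ?\<beta> = "(\<alpha> + (arc_count - 1)) mod arc_count"
  have m2: "2 \<le> arc_count" by (rule two_le_arc_count)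
  then have \<beta>: "?\<beta> < arc_count" by simp
  have "(cw_dist N (nth_start \<alpha>) (end_of (nth_start ?\<beta>)) \<le> k)
      = ((?\<beta> + arc_count - \<alpha>) mod arc_count \<le> shift)"
    using reaches_iff_rank_diff[OF nth_start_in[OF assms] nth_start_in[OF \<beta>]] rank_nth_start assms \<beta>
    by simp
  also have "\<dots> = (arc_count - 1 \<le> shift)" using mod_diff_pred[OF assms m2] by simp
  finally show ?thesis using arc_count_eq unfolding nth_arc_def by simp
qed

lemma subarc_of_nth_arc:
  assumes "p \<in> T" shows "\<exists>\<alpha><arc_count. subarc p (nth_arc \<alpha>)"
proof -
  obtain J where J: "J \<in> max_arcs" "subarc p J" using subarc_of_max_arc assms by blast
  have cS: "fst J \<in> starts" using J unfolding starts_def by force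
  have "nth_arc (rank (fst J)) = J"
    using nth_start_rank[OF cS] end_of_eq[of "fst J" "snd J"] J unfolding nth_arc_def by simp
  then show ?thesis using rank_less_count[OF cS] J by metis
qed

lemma subarc_of_nth_arc_in:
  assumes "\<alpha> < arc_count" "fst (nth_arc \<alpha>) \<le> a" "a \<le> b" "b \<le> snd (nth_arc \<alpha>)"
  shows "(a,b) \<in> T"
proof -
  let ?A = "nth_start \<alpha>"
  have AS: "?A \<in> starts" using nth_start_in assms by simp
  have rA: "0 \<le> ?A \<and> ?A \<le> end_of ?A \<and> end_of ?A < N \<and> end_of ?A - ?A < k" using start_end_bounds[OF AS] .
  show ?thesis
  proof (rule maximal)
    show "0 \<le> a" "a < N" "0 \<le> b" "b < N" "cw_dist N a b \<le> k"
      using rA assms unfolding nth_arc_def cw_dist_def by auto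
    show "\<forall>q\<in>T. arcs_compatible N k (a, b) q"
    proof
      fix q assume qT: "q \<in> T"
      obtain c d where qcd: "q = (c,d)" by (cases q)
      obtain J where J: "J \<in> max_arcs" "subarc q J" using subarc_of_max_arc qT by blast
      obtain C D where JCD: "J = (C,D)" by (cases J)
      have CS: "C \<in> starts" using J JCD unfolding starts_def by force
      have rC: "0 \<le> C \<and> C \<le> D \<and> D < N \<and> D - C < k" using start_end_bounds[OF CS] end_of_eq J JCD by simp
      have ct: "C \<le> c" "d \<le> D" using J(2) JCD qcd unfolding subarc_def by auto
      have cd: "c \<le> d" using arc_in_window qT qcd unfolding in_window_def by simp
      have cpb: "arcs_compatible N k (?A, end_of ?A) (C, D)"
        using compatible[OF max_arc_in[OF end_of_max_arc[OF AS]] max_arc_in[OF J(1)]] JCD by simp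
      have dj: "(?A = C \<and> end_of ?A = D) \<or> end_of ?A < C \<or> D < ?A"
        using max_arcs_disjoint[OF end_of_max_arc[OF AS] J(1)[unfolded JCD]] end_of_eq J JCD by fastforce
      show "arcs_compatible N k (a,b) q" unfolding qcd
        by (rule arcs_compatible_subarcs[of k N ?A a b "end_of ?A" C c d D])
          (use size_bounds rA assms rC ct cd dj cpb in \<open>auto simp: nth_arc_def\<close>)
    qed
  qed
qed

theorem matching_arcs_nth_arc: "1 \<le> shift \<and> matching_arcs N k T shift nth_arc"
proof -
  have count: "arc_count = 2*shift + 1" and t1: "1 \<le> shift" using arc_count_eq by auto
  have ordered: "snd (nth_arc \<alpha>) < fst (nth_arc \<beta>)" if "\<alpha> < \<beta>" "\<beta> < arc_count" for \<alpha> \<beta>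
    using nth_start_strict_mono[OF that] end_of_less_start nth_start_in that unfolding nth_arc_def
      by simp
  have T_eq: "T = {(a,b). \<exists>\<alpha><arc_count. fst (nth_arc \<alpha>) \<le> a \<and> a \<le> b \<and> b \<le> snd (nth_arc \<alpha>)}"
  proof (intro set_eqI iffI)
    fix p assume "p \<in> T"
    moreover obtain \<alpha> where "\<alpha> < arc_count" "subarc p (nth_arc \<alpha>)"
      using subarc_of_nth_arc[OF \<open>p \<in> T\<close>] by blast
    ultimately show "p \<in> {(a,b). \<exists>\<alpha><arc_count. fst (nth_arc \<alpha>) \<le> a \<and> a \<le> b \<and> b \<le> snd (nth_arc \<alpha>)}"
      using arc_in_window[of "fst p" "snd p"] unfolding subarc_def in_window_def by auto
  next
    fix p assume "p \<in> {(a,b). \<exists>\<alpha><arc_count. fst (nth_arc \<alpha>) \<le> a \<and> a \<le> b \<and> b \<le> snd (nth_arc \<alpha>)}"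
    then show "p \<in> T" using subarc_of_nth_arc_in by auto
  qed
  have "fst (nth_arc \<alpha>) \<le> snd (nth_arc \<alpha>)" if "\<alpha> < arc_count" for \<alpha>
    using start_end_bounds nth_start_in that unfolding nth_arc_def by simp
  moreover have "k < cw_dist N (fst (nth_arc \<alpha>)) (snd (nth_arc ((\<alpha> + 2*shift) mod (2*shift+1))))"
    if "\<alpha> < arc_count" for \<alpha>
    using nth_arc_not_reaching_pred[OF that] unfolding count by simp
  ultimately show ?thesis
    using t1 ordered nth_arc_reaches_ahead T_eq unfolding matching_arcs_def count[symmetric] by blast
qed

end

section \<open>Incomparable pairs of the crown as arcs\<close>

lemma mod_diff_eq_cw_dist:
  fixes x y z N :: nat
  assumes "x < N" "y < N" "z < N"
  shows "int ((y + N - x) mod N) = cw_dist (int N) (int ((x + N - z) mod N)) (int ((y + N - z) mod N))"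
  using assms unfolding mod_diff_eq_cases[OF assms(3) assms(1)] mod_diff_eq_cases[OF assms(3) assms(2)]
    mod_diff_eq_cases[OF assms(1) assms(2)] cw_dist_def
  by (auto split: if_splits)

lemma add_mod_diff_cancel:
  fixes w z N :: nat
  assumes "w < N" "z < N"
  shows "(z + (w + N - z) mod N) mod N = w"
proof (cases "z \<le> w")
  case True
  then have "(w + N - z) mod N = w - z" using mod_diff_eq_cases[OF assms(2,1)] by simp
  then show ?thesis using True assms by simp
next
  case False
  then have "(w + N - z) mod N = w + N - z" using mod_diff_eq_cases[OF assms(2,1)] by simp
  moreover have "z + (w + N - z) = w + N" using False assms by arith
  ultimately show ?thesis using assms by simp
qed

lemma mod_diff_add_cancel:
  fixes c z N :: nat
  assumes "c < N" "z < N"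
  shows "((z + c) mod N + N - z) mod N = c"
proof (cases "z + c < N")
  case True
  then show ?thesis using mod_diff_eq_cases[of z "z + c" N] assms by simp
next
  case False
  then have e: "(z + c) mod N = z + c - N" using assms by (simp add: mod_if)
  then have "(z + c) mod N < N" using assms by simp
  then show ?thesis using mod_diff_eq_cases[of z "(z + c) mod N" N] e False assms by auto
qed

lemma ex_le_mod_iff:
  fixes i j k N :: nat
  assumes "i < N" "j < N" "k < N"
  shows "(\<exists>d\<le>k. j = (i + d) mod N) \<longleftrightarrow> (j + N - i) mod N \<le> k"
proof
  assume "\<exists>d\<le>k. j = (i + d) mod N"
  then obtain d where "d \<le> k" "j = (i + d) mod N" by auto
  then show "(j + N - i) mod N \<le> k" using mod_diff_add_cancel[of d N i] assms by simp
next
  assume "(j + N - i) mod N \<le> k"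
  then show "\<exists>d\<le>k. j = (i + d) mod N"
    using add_mod_diff_cancel[of j N i] assms by (intro exI[of _ "(j + N - i) mod N"]) auto
qed

lemma circ_chainD:
  "circ_chain N ps st \<Longrightarrow> Suc j < length ps \<Longrightarrow> cwd N (ps!0) (ps!j) \<le> cwd N (ps!0) (ps!Suc j)
     \<and> (st!j \<longrightarrow> cwd N (ps!0) (ps!j) < cwd N (ps!0) (ps!Suc j))"
  unfolding circ_chain_def by blast

lemma circ_chain4_iff:
  "circ_chain N [p0,p1,p2,p3] [s0,s1,s2] \<longleftrightarrow>
     (s0 \<longrightarrow> 0 < cwd N p0 p1) \<and>
     cwd N p0 p1 \<le> cwd N p0 p2 \<and> (s1 \<longrightarrow> cwd N p0 p1 < cwd N p0 p2) \<and>
     cwd N p0 p2 \<le> cwd N p0 p3 \<and> (s2 \<longrightarrow> cwd N p0 p2 < cwd N p0 p3)"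
  unfolding circ_chain_def by (auto simp: cwd_def less_Suc_eq numeral_eq_Suc)

lemma circ_chain6_alternatingD:
  assumes "circ_chain N [q0,q1,q2,q3,q4,q5] [False,True,False,True,False]"
  shows "cwd N q0 q1 < cwd N q0 q2" "cwd N q0 q2 \<le> cwd N q0 q3"
    "cwd N q0 q3 < cwd N q0 q4" "cwd N q0 q4 \<le> cwd N q0 q5"
  using circ_chainD[OF assms, of 1] circ_chainD[OF assms, of 2] circ_chainD[OF assms, of 3]
    circ_chainD[OF assms, of 4]
  by (simp_all add: numeral_eq_Suc)

lemma crown_less_Ael_Bel_iff: assumes "i < n+k" "j < n+k" "0 < n"
  shows "crown_less n k (Ael i) (Bel j) \<longleftrightarrow> k < (j + (n+k) - i) mod (n+k)"
  unfolding crown_less_def using ex_le_mod_iff[of i "n+k" j k] assms by auto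

lemma crown_le_Ael_Bel_iff: assumes "i < n+k" "j < n+k" "0 < n"
  shows "crown_le n k (Ael i) (Bel j) \<longleftrightarrow> k < (j + (n+k) - i) mod (n+k)"
  unfolding crown_le_def using crown_less_Ael_Bel_iff[OF assms] by simp

lemma not_crown_le_Bel_Ael: "\<not> crown_le n k (Bel j) (Ael i)"
  unfolding crown_le_def crown_less_def by simp

lemma Inc_iff: assumes "0 < n"
  shows "(a,b) \<in> Inc n k \<longleftrightarrow> (\<exists>i j. a = Ael i \<and> b = Bel j \<and> i < n+k \<and> j < n+k \<and> (j + (n+k) - i) mod (n+k) \<le> k)"
proof
  assume "(a,b) \<in> Inc n k"
  then obtain i j where ij: "a = Ael i" "b = Bel j" "i < n+k" "j < n+k" "incomparable n k a b"
    unfolding Inc_def crownA_def crownB_def by auto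
  then show "\<exists>i j. a = Ael i \<and> b = Bel j \<and> i < n+k \<and> j < n+k \<and> (j + (n+k) - i) mod (n+k) \<le> k"
    using crown_le_Ael_Bel_iff[OF ij(3,4) assms] unfolding incomparable_def by auto
next
  assume "\<exists>i j. a = Ael i \<and> b = Bel j \<and> i < n+k \<and> j < n+k \<and> (j + (n+k) - i) mod (n+k) \<le> k"
  then obtain i j where ij: "a = Ael i" "b = Bel j" "i < n+k" "j < n+k" "(j + (n+k) - i) mod (n+k) \<le> k" by auto
  then show "(a,b) \<in> Inc n k"
    using crown_le_Ael_Bel_iff[OF ij(3,4) assms] not_crown_le_Bel_Ael
      unfolding Inc_def crownA_def crownB_def incomparable_def
    by auto
qed

lemma Inc_pos: assumes "p \<in> Inc n k" "0 < n"
  shows "fst p = Ael (pos (fst p)) \<and> snd p = Bel (pos (snd p)) \<and> pos (fst p) < n+k \<and> pos (snd p) < n+k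
     \<and> cwd (n+k) (fst p) (snd p) \<le> k"
proof -
  obtain a b where p: "p = (a,b)" by (cases p)
  then obtain i j where "a = Ael i \<and> b = Bel j \<and> i < n+k \<and> j < n+k \<and> (j + (n+k) - i) mod (n+k) \<le> k"
    using Inc_iff[OF assms(2)] assms(1) by auto
  then show ?thesis using p unfolding cwd_def by auto
qed

lemma crown_less_Inc_iff:
  assumes "p \<in> Inc n k" "q \<in> Inc n k" "0 < n"
  shows "crown_less n k (fst p) (snd q) \<longleftrightarrow> k < cwd (n+k) (fst p) (snd q)"
proof -
  have P: "fst p = Ael (pos (fst p))" "pos (fst p) < n+k" using Inc_pos[OF assms(1,3)] by auto
  have Q: "snd q = Bel (pos (snd q))" "pos (snd q) < n+k" using Inc_pos[OF assms(2,3)] by auto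
  have "crown_less n k (Ael (pos (fst p))) (Bel (pos (snd q)))
      \<longleftrightarrow> k < (pos (snd q) + (n+k) - pos (fst p)) mod (n+k)"
    by (rule crown_less_Ael_Bel_iff[OF P(2) Q(2) assms(3)])
  then show ?thesis unfolding cwd_def using P Q by simp
qed

lemma crown_le_Inc_iff:
  assumes "p \<in> Inc n k" "q \<in> Inc n k" "0 < n"
  shows "crown_le n k (fst p) (snd q) \<longleftrightarrow> k < cwd (n+k) (fst p) (snd q)"
  using crown_less_Inc_iff[OF assms] Inc_pos[OF assms(1,3)] Inc_pos[OF assms(2,3)]
  unfolding crown_le_def by (metis cel.distinct(1))

lemma G_adj_Inc_iff:
  assumes "p \<in> Inc n k" "q \<in> Inc n k" "0 < n"
  shows "G_adj n k p q \<longleftrightarrow> k < cwd (n+k) (fst p) (snd q) \<and> k < cwd (n+k) (fst q) (snd p)"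
  unfolding G_adj_def using crown_less_Inc_iff assms by blast

text \<open>Reading the circle clockwise from the point \<open>u_z\<close>: position \<open>w\<close> becomes \<open>rot w\<close>, and a pair
  \<open>(a_i, b_j)\<close> becomes the arc from \<open>rot i\<close> to \<open>rot j\<close>.\<close>
locale rotated_crown =
  fixes n k z :: nat
  assumes n_pos: "0 < n" and z_less: "z < n + k"
begin

definition rot :: "nat \<Rightarrow> int" where
  "rot w = int ((w + (n+k) - z) mod (n+k))"

definition arc :: "cel \<times> cel \<Rightarrow> int \<times> int" where
  "arc p = (rot (pos (fst p)), rot (pos (snd p)))"

definition unarc :: "int \<times> int \<Rightarrow> cel \<times> cel" where
  "unarc q = (Ael ((z + nat (fst q)) mod (n+k)), Bel ((z + nat (snd q)) mod (n+k)))"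

lemma rot_bounds: "0 \<le> rot w \<and> rot w < int (n+k)"
proof -
  have "(w + (n+k) - z) mod (n+k) < n+k" using n_pos by simp
  then show ?thesis unfolding rot_def by linarith
qed

lemma cwd_eq_cw_dist_rot:
  "pos x < n+k \<Longrightarrow> pos y < n+k \<Longrightarrow> int (cwd (n+k) x y) = cw_dist (int (n+k)) (rot (pos x)) (rot (pos y))"
  unfolding rot_def cwd_def using mod_diff_eq_cw_dist z_less by blast

lemma cwd_Inc_arc:
  "p \<in> Inc n k \<Longrightarrow> q \<in> Inc n k \<Longrightarrow>
     int (cwd (n+k) (fst p) (snd q)) = cw_dist (int (n+k)) (fst (arc p)) (snd (arc q))"
  unfolding arc_def using cwd_eq_cw_dist_rot Inc_pos[OF _ n_pos] by simp

lemma unarc_arc: "p \<in> Inc n k \<Longrightarrow> unarc (arc p) = p"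
  using Inc_pos[OF _ n_pos] add_mod_diff_cancel[OF _ z_less]
  unfolding unarc_def arc_def rot_def by (simp add: prod_eq_iff)

lemma arc_unarc: "0 \<le> a \<Longrightarrow> a < int (n+k) \<Longrightarrow> 0 \<le> b \<Longrightarrow> b < int (n+k) \<Longrightarrow> arc (unarc (a,b)) = (a,b)"
  unfolding unarc_def arc_def rot_def
  using mod_diff_add_cancel[of "nat a" "n+k" z] mod_diff_add_cancel[of "nat b" "n+k" z] z_less by simp

lemma arc_bounds_Inc: "p \<in> Inc n k \<Longrightarrow> cw_dist (int (n+k)) (fst (arc p)) (snd (arc p)) \<le> int k"
  using cwd_Inc_arc[of p p] Inc_pos[OF _ n_pos] by fastforce

lemma unarc_Inc:
  assumes "0 \<le> a" "a < int (n+k)" "0 \<le> b" "b < int (n+k)" "cw_dist (int (n+k)) a b \<le> int k"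
  shows "unarc (a,b) \<in> Inc n k"
proof -
  let ?r = "unarc (a,b)"
  have "pos (fst ?r) < n+k" "pos (snd ?r) < n+k" unfolding unarc_def using n_pos by auto
  moreover have "arc ?r = (a,b)" using arc_unarc assms by simp
  ultimately have "cwd (n+k) (fst ?r) (snd ?r) \<le> k"
    using cwd_eq_cw_dist_rot assms(5) unfolding arc_def by fastforce
  then show ?thesis using Inc_iff[OF n_pos] n_pos unfolding unarc_def cwd_def by auto
qed

lemma G_adj_iff_not_compatible:
  "p \<in> Inc n k \<Longrightarrow> q \<in> Inc n k \<Longrightarrow> G_adj n k p q \<longleftrightarrow> \<not> arcs_compatible (int (n+k)) (int k) (arc p) (arc q)"
  using G_adj_Inc_iff[OF _ _ n_pos] cwd_Inc_arc unfolding arcs_compatible_def by fastforce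

lemma crown_le_iff_cw_dist:
  "p \<in> Inc n k \<Longrightarrow> q \<in> Inc n k \<Longrightarrow>
     crown_le n k (fst p) (snd q) \<longleftrightarrow> int k < cw_dist (int (n+k)) (fst (arc p)) (snd (arc q))"
  using crown_le_Inc_iff[OF _ _ n_pos] cwd_Inc_arc by fastforce

lemma independent_iff_arcs_compatible:
  assumes "S \<subseteq> Inc n k"
  shows "independent n k S \<longleftrightarrow> (\<forall>p\<in>arc ` S. \<forall>q\<in>arc ` S. arcs_compatible (int (n+k)) (int k) p q)"
  using assms G_adj_iff_not_compatible unfolding independent_def by blast

lemma maximal_independent_arc_closed:
  assumes max: "maximal_independent n k S"
    and ab: "0 \<le> a" "a < int (n+k)" "0 \<le> b" "b < int (n+k)" "cw_dist (int (n+k)) a b \<le> int k"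
    and compat: "\<forall>q\<in>arc ` S. arcs_compatible (int (n+k)) (int k) (a,b) q"
  shows "(a,b) \<in> arc ` S"
proof -
  have S: "independent n k S" "S \<subseteq> Inc n k" using max
    unfolding maximal_independent_def independent_def by auto
  have rI: "unarc (a,b) \<in> Inc n k" using unarc_Inc ab by blast
  have "arc ` insert (unarc (a,b)) S = insert (a,b) (arc ` S)" using arc_unarc ab by simp
  moreover have "arcs_compatible (int (n+k)) (int k) (a,b) (a,b)" using ab
    unfolding arcs_compatible_def by simp
  ultimately have "independent n k (insert (unarc (a,b)) S)"
    using independent_iff_arcs_compatible[of "insert (unarc (a,b)) S"] independent_iff_arcs_compatible[of S]
      S rI compat arcs_compatible_commute by auto
  then have "insert (unarc (a,b)) S = S" using max unfolding maximal_independent_def by blast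
  then show ?thesis using arc_unarc ab by force
qed


lemma rot_eq_k:
  assumes "w < n+k" "z = (w + (n+k) - k) mod (n+k)"
  shows "rot w = int k"
proof -
  have "k < n+k" using n_pos by simp
  then have "(z + k) mod (n+k) = w" using add_mod_diff_cancel[of w "n+k" k] assms
    by (simp add: add.commute)
  then show ?thesis using mod_diff_add_cancel[of k "n+k" z] z_less \<open>k < n+k\<close> unfolding rot_def by metis
qed

lemma arc_cycle_family_of_crown:
  assumes nk: "k < n" "n \<le> 2*k"
    and max: "maximal_independent n k S"
    and cyc: "strict_alt_cycle n k 3 c" "c ` {..<3} \<subseteq> S" "disjoint_property n k c"
    and z: "z = (pos (snd (c 1)) + (n+k) - k) mod (n+k)"
  shows "arc_cycle_family (int (n+k)) (int k) (arc ` S)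
           (fst (arc (c 0))) (snd (arc (c 0))) (fst (arc (c 1))) (snd (arc (c 1)))
           (fst (arc (c 2))) (snd (arc (c 2)))"
proof -
  let ?N = "int (n+k)" and ?a = "\<lambda>i. fst (arc (c i))" and ?b = "\<lambda>i. snd (arc (c i))"
  have SI: "S \<subseteq> Inc n k" using max unfolding maximal_independent_def independent_def by auto
  have cI: "c i \<in> Inc n k" if "i < 3" for i using cyc(2) SI that by auto
  have strict: "int k < cw_dist ?N (?a \<alpha>) (?b \<beta>) \<longleftrightarrow> \<beta> = (\<alpha> + 2) mod 3" if "\<alpha> < 3" "\<beta> < 3" for \<alpha> \<beta>
    using cyc(1) that crown_le_iff_cw_dist[OF cI[OF that(1)] cI[OF that(2)]]
    unfolding strict_alt_cycle_def by simp
  have pos_c: "pos (fst (c i)) < n+k" "pos (snd (c i)) < n+k" if "i < 3" for i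
    using Inc_pos[OF cI[OF that] n_pos] by auto
  have dist0: "cw_dist ?N (?a 0) (rot (pos y)) = int (cwd (n+k) (fst (c 0)) y)" if "pos y < n+k" for y
    using cwd_eq_cw_dist_rot[OF pos_c(1)[of 0] that] unfolding arc_def by simp
  have chain: "circ_chain (n+k) [fst (c 0), snd (c 0), fst (c 1), snd (c 1), fst (c 2), snd (c 2)]
      [False, True, False, True, False]"
    using cyc(3) unfolding disjoint_property_def by blast
  show ?thesis
  proof (unfold_locales)
    show "2 * int k < ?N" "?N \<le> 3 * int k" using nk by auto
    show "0 \<le> a \<and> a < ?N \<and> 0 \<le> b \<and> b < ?N \<and> cw_dist ?N a b \<le> int k" if "(a,b) \<in> arc ` S" for a b
      using that rot_bounds arc_bounds_Inc SI unfolding arc_def by fastforce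
    show "arcs_compatible ?N (int k) p q" if "p \<in> arc ` S" "q \<in> arc ` S" for p q
      using independent_iff_arcs_compatible[OF SI] max that unfolding maximal_independent_def by blast
    show "(a,b) \<in> arc ` S" if "0 \<le> a" "a < ?N" "0 \<le> b" "b < ?N" "cw_dist ?N a b \<le> int k"
      "\<forall>q\<in>arc ` S. arcs_compatible ?N (int k) (a,b) q" for a b
      using maximal_independent_arc_closed[OF max] that by blast
    show "(?a 0, ?b 0) \<in> arc ` S" "(?a 1, ?b 1) \<in> arc ` S" "(?a 2, ?b 2) \<in> arc ` S"
      using cyc(2) by force+
    show "?b 1 = int k" using rot_eq_k[OF pos_c(2)[of 1] z] unfolding arc_def by simp
    show "cw_dist ?N (?a 0) (?b 0) < cw_dist ?N (?a 0) (?a 1)" "cw_dist ?N (?a 0) (?a 1) \<le> cw_dist ?N (?a 0) (?b 1)"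
      "cw_dist ?N (?a 0) (?b 1) < cw_dist ?N (?a 0) (?a 2)" "cw_dist ?N (?a 0) (?a 2) \<le> cw_dist ?N (?a 0) (?b 2)"
      using circ_chain6_alternatingD[OF chain]
        dist0[OF pos_c(2)[of 0]] dist0[OF pos_c(1)[of 1]] dist0[OF pos_c(2)[of 1]]
        dist0[OF pos_c(1)[of 2]] dist0[OF pos_c(2)[of 2]]
      unfolding arc_def by simp_all
    show "cw_dist ?N (?a 0) (?b 0) \<le> int k" "cw_dist ?N (?a 0) (?b 1) \<le> int k" "int k < cw_dist ?N (?a 0) (?b 2)"
      "cw_dist ?N (?a 1) (?b 1) \<le> int k" "cw_dist ?N (?a 1) (?b 2) \<le> int k" "int k < cw_dist ?N (?a 1) (?b 0)"
      "cw_dist ?N (?a 2) (?b 2) \<le> int k" "cw_dist ?N (?a 2) (?b 0) \<le> int k" "int k < cw_dist ?N (?a 2) (?b 1)"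
      using strict[of 0 0] strict[of 0 1] strict[of 0 2] strict[of 1 0] strict[of 1 1] strict[of 1 2]
        strict[of 2 0] strict[of 2 1] strict[of 2 2] by simp_all
  qed
qed


lemma cwd_Inc_arc_fst:
  "p \<in> Inc n k \<Longrightarrow> q \<in> Inc n k \<Longrightarrow>
     int (cwd (n+k) (fst p) (fst q)) = cw_dist (int (n+k)) (fst (arc p)) (fst (arc q))"
  unfolding arc_def using cwd_eq_cw_dist_rot Inc_pos[OF _ n_pos] by simp

context
  fixes S :: "(cel \<times> cel) set" and t :: nat and f :: "nat \<Rightarrow> int \<times> int"
  assumes S_Inc: "S \<subseteq> Inc n k"
    and matching: "matching_arcs (int (n+k)) (int k) (arc ` S) t f"
begin

lemma unarc_matching_arc:
  assumes "\<alpha> < 2*t+1"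
  shows "unarc (f \<alpha>) \<in> S" "arc (unarc (f \<alpha>)) = f \<alpha>"
proof -
  have "fst (f \<alpha>) \<le> snd (f \<alpha>)" and T_eq:
    "arc ` S = {(a,b). \<exists>\<alpha><2*t+1. fst (f \<alpha>) \<le> a \<and> a \<le> b \<and> b \<le> snd (f \<alpha>)}"
    using matching assms unfolding matching_arcs_def by blast+
  then have "f \<alpha> \<in> arc ` S" using assms by (cases "f \<alpha>") auto
  then obtain p where "p \<in> S" "f \<alpha> = arc p" by auto
  moreover have "unarc (arc p) = p" using unarc_arc \<open>p \<in> S\<close> S_Inc by blast
  ultimately show "unarc (f \<alpha>) \<in> S" "arc (unarc (f \<alpha>)) = f \<alpha>" by simp_all
qed

lemma matching_arc_bounds:
  assumes "\<alpha> < 2*t+1"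
  shows "0 \<le> fst (f \<alpha>) \<and> fst (f \<alpha>) \<le> snd (f \<alpha>) \<and> snd (f \<alpha>) < int (n+k)"
proof -
  obtain q where "f \<alpha> = arc q" using unarc_matching_arc(2)[OF assms] by metis
  then have "0 \<le> fst (f \<alpha>)" "snd (f \<alpha>) < int (n+k)" using rot_bounds unfolding arc_def by simp_all
  moreover have "fst (f \<alpha>) \<le> snd (f \<alpha>)" using matching assms unfolding matching_arcs_def by blast
  ultimately show ?thesis by simp
qed

lemma alt_cycle_unarc: "alt_cycle n k (2*t+1) (unarc \<circ> f)"
  unfolding alt_cycle_def
proof (intro conjI)
  show "inj_on (unarc \<circ> f) {..<2*t+1}"
  proof (rule inj_onI)
    fix \<alpha> \<beta> assume h: "\<alpha> \<in> {..<2*t+1}" "\<beta> \<in> {..<2*t+1}" "(unarc \<circ> f) \<alpha> = (unarc \<circ> f) \<beta>"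
    then have eq: "f \<alpha> = f \<beta>" using unarc_matching_arc(2) by (metis comp_apply lessThan_iff)
    show "\<alpha> = \<beta>"
    proof (rule ccontr)
      assume "\<alpha> \<noteq> \<beta>"
      then consider "\<alpha> < \<beta>" | "\<beta> < \<alpha>" by linarith
      then show False
      proof cases
        case 1
        then have "snd (f \<alpha>) < fst (f \<beta>)" using matching h(2) unfolding matching_arcs_def by auto
        then show False using eq matching_arc_bounds[of \<beta>] h(2) by simp
      next
        case 2
        then have "snd (f \<beta>) < fst (f \<alpha>)" using matching h(1) unfolding matching_arcs_def by auto
        then show False using eq matching_arc_bounds[of \<alpha>] h(1) by simp
      qed
    qed
  qed
  show "(unarc \<circ> f) ` {..<2*t+1} \<subseteq> Inc n k" using unarc_matching_arc(1) S_Inc by auto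
  show "\<forall>\<alpha><2*t+1. crown_le n k (fst ((unarc \<circ> f) \<alpha>)) (snd ((unarc \<circ> f) ((\<alpha> + (2*t+1) - 1) mod (2*t+1))))"
  proof (intro allI impI)
    fix \<alpha> assume \<alpha>: "\<alpha> < 2*t+1"
    let ?\<beta> = "(\<alpha> + 2*t) mod (2*t+1)"
    have \<beta>: "?\<beta> < 2*t+1" by simp
    have "int k < cw_dist (int (n+k)) (fst (f \<alpha>)) (snd (f ?\<beta>))"
      using matching \<alpha> unfolding matching_arcs_def by blast
    then have "crown_le n k (fst (unarc (f \<alpha>))) (snd (unarc (f ?\<beta>)))"
      using crown_le_iff_cw_dist[of "unarc (f \<alpha>)" "unarc (f ?\<beta>)"]
        unarc_matching_arc[OF \<alpha>] unarc_matching_arc[OF \<beta>] S_Inc by auto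
    then show "crown_le n k (fst ((unarc \<circ> f) \<alpha>)) (snd ((unarc \<circ> f) ((\<alpha> + (2*t+1) - 1) mod (2*t+1))))"
      by simp
  qed
qed simp

lemma matching_arcs_successor:
  assumes t: "1 \<le> t" and \<alpha>: "\<alpha> < 2*t+1"
  defines "\<beta> \<equiv> (\<alpha> + 1) mod (2*t+1)"
  shows "cw_dist (int (n+k)) (fst (f \<alpha>)) (snd (f \<alpha>)) < cw_dist (int (n+k)) (fst (f \<alpha>)) (fst (f \<beta>))
    \<and> cw_dist (int (n+k)) (fst (f \<alpha>)) (fst (f \<beta>)) \<le> cw_dist (int (n+k)) (fst (f \<alpha>)) (snd (f \<beta>))"
proof -
  have ordered: "snd (f \<gamma>) < fst (f \<delta>)" if "\<gamma> < \<delta>" "\<delta> < 2*t+1" for \<gamma> \<delta>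
    using matching that unfolding matching_arcs_def by blast
  show ?thesis
  proof (cases "\<alpha> + 1 < 2*t+1")
    case True
    then show ?thesis using ordered[of \<alpha> "\<alpha> + 1"] matching_arc_bounds[OF \<alpha>] matching_arc_bounds[OF True]
      unfolding \<beta>_def cw_dist_def by auto
  next
    case False
    then have "\<alpha> = 2*t" using \<alpha> by simp
    then have "\<beta> = 0" "snd (f 0) < fst (f \<alpha>)" using ordered[of 0 \<alpha>] t unfolding \<beta>_def by simp_all
    then show ?thesis using matching_arc_bounds[OF \<alpha>] matching_arc_bounds[of 0]
      unfolding cw_dist_def by auto
  qed
qed

lemma matching_conditions_unarc:
  assumes t: "1 \<le> t"
  shows "matching_conditions n k t (unarc \<circ> f)"
  unfolding matching_conditions_def
proof (intro allI impI conjI)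
  fix \<alpha> assume \<alpha>: "\<alpha> < 2*t+1"
  let ?c = "unarc \<circ> f" and ?\<beta> = "(\<alpha> + 1) mod (2*t+1)"
  have \<beta>: "?\<beta> < 2*t+1" by simp
  have I: "?c \<gamma> \<in> Inc n k" "arc (?c \<gamma>) = f \<gamma>" if "\<gamma> < 2*t+1" for \<gamma>
    using unarc_matching_arc[OF that] S_Inc by auto
  show "circ_chain (n+k) [fst (?c \<alpha>), snd (?c \<alpha>), fst (?c ?\<beta>), snd (?c ?\<beta>)] [False, True, False]"
    using matching_arcs_successor[OF t \<alpha>] cwd_Inc_arc[OF I(1)[OF \<alpha>] I(1)[OF \<alpha>]]
      cwd_Inc_arc_fst[OF I(1)[OF \<alpha>] I(1)[OF \<beta>]] cwd_Inc_arc[OF I(1)[OF \<alpha>] I(1)[OF \<beta>]]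
      I(2)[OF \<alpha>] I(2)[OF \<beta>]
    unfolding circ_chain4_iff by simp
  let ?\<gamma> = "(\<alpha> + t) mod (2*t+1)"
  have \<gamma>: "?\<gamma> < 2*t+1" by simp
  have "int (cwd (n+k) (fst (?c \<alpha>)) (snd (?c ?\<gamma>))) = int k"
    using cwd_Inc_arc[OF I(1)[OF \<alpha>] I(1)[OF \<gamma>]] I(2)[OF \<alpha>] I(2)[OF \<gamma>] matching \<alpha>
    unfolding matching_arcs_def by simp
  then show "pair_size (n+k) (fst (?c \<alpha>)) (snd (?c ?\<gamma>)) = k + 1" unfolding pair_size_def by simp
qed

lemma circ_chain_unarc_iff:
  assumes \<alpha>: "\<alpha> < 2*t+1" and p: "p \<in> Inc n k"
  shows "circ_chain (n+k) [fst (unarc (f \<alpha>)), fst p, snd p, snd (unarc (f \<alpha>))] [False, False, False]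
    \<longleftrightarrow> fst (f \<alpha>) \<le> fst (arc p) \<and> fst (arc p) \<le> snd (arc p) \<and> snd (arc p) \<le> snd (f \<alpha>)"
proof -
  have I: "unarc (f \<alpha>) \<in> Inc n k" "arc (unarc (f \<alpha>)) = f \<alpha>"
    using unarc_matching_arc[OF \<alpha>] S_Inc by auto
  let ?d = "cw_dist (int (n+k)) (fst (f \<alpha>))"
  have "?d (fst (arc p)) = int (cwd (n+k) (fst (unarc (f \<alpha>))) (fst p))"
    "?d (snd (arc p)) = int (cwd (n+k) (fst (unarc (f \<alpha>))) (snd p))"
    "?d (snd (f \<alpha>)) = int (cwd (n+k) (fst (unarc (f \<alpha>))) (snd (unarc (f \<alpha>))))"
    using cwd_Inc_arc_fst[OF I(1) p] cwd_Inc_arc[OF I(1) p] cwd_Inc_arc[OF I(1) I(1)]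
    unfolding I(2) by simp_all
  then have "circ_chain (n+k) [fst (unarc (f \<alpha>)), fst p, snd p, snd (unarc (f \<alpha>))] [False, False, False]
      \<longleftrightarrow> ?d (fst (arc p)) \<le> ?d (snd (arc p)) \<and> ?d (snd (arc p)) \<le> ?d (snd (f \<alpha>))"
    unfolding circ_chain4_iff by simp
  also have "\<dots> \<longleftrightarrow> fst (f \<alpha>) \<le> fst (arc p) \<and> fst (arc p) \<le> snd (arc p) \<and> snd (arc p) \<le> snd (f \<alpha>)"
    using cw_dist_subarc_iff matching_arc_bounds[OF \<alpha>] rot_bounds unfolding arc_def by simp
  finally show ?thesis .
qed

lemma Dset_unarc: "Dset n k (2*t+1) (unarc \<circ> f) = S"
proof (rule set_eqI)
  fix p
  show "p \<in> Dset n k (2*t+1) (unarc \<circ> f) \<longleftrightarrow> p \<in> S"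
  proof (cases "p \<in> Inc n k")
    case False
    then show ?thesis using S_Inc unfolding Dset_def by auto
  next
    case True
    have T_eq: "arc ` S = {(a,b). \<exists>\<alpha><2*t+1. fst (f \<alpha>) \<le> a \<and> a \<le> b \<and> b \<le> snd (f \<alpha>)}"
      using matching unfolding matching_arcs_def by blast
    have "p \<in> Dset n k (2*t+1) (unarc \<circ> f) \<longleftrightarrow>
        (\<exists>\<alpha><2*t+1. circ_chain (n+k) [fst (unarc (f \<alpha>)), fst p, snd p, snd (unarc (f \<alpha>))] [False, False, False])"
      using True unfolding Dset_def by (cases p) simp
    also have "\<dots> \<longleftrightarrow> arc p \<in> arc ` S"
      using circ_chain_unarc_iff[OF _ True] unfolding T_eq by (cases "arc p") auto
    also have "\<dots> \<longleftrightarrow> p \<in> S"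
    proof
      assume "arc p \<in> arc ` S"
      then obtain q where "q \<in> S" "arc p = arc q" by auto
      then have "p = q" using unarc_arc True S_Inc by (metis subsetD)
      then show "p \<in> S" using \<open>q \<in> S\<close> by simp
    qed simp
    finally show ?thesis .
  qed
qed

end

end

theorem theorem5p7:
  fixes n k :: nat and S :: "(cel \<times> cel) set"
  assumes "n \<ge> 3" and "k < n" and "n \<le> 2 * k"
    and "maximal_independent n k S"
    and "\<not> reversible n k S"
    and "\<exists>c. strict_alt_cycle n k 3 c \<and> c ` {..<3} \<subseteq> S \<and> disjoint_property n k c"
  shows "\<exists>t c0. t \<ge> 1 \<and> alt_cycle n k (2 * t + 1) c0 \<and> matching_conditions n k t c0
            \<and> S = Dset n k (2 * t + 1) c0"
proof -
  obtain c where c: "strict_alt_cycle n k 3 c" "c ` {..<3} \<subseteq> S" "disjoint_property n k c"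
    using assms(6) by blast
  define z where "z = (pos (snd (c 1)) + (n+k) - k) mod (n+k)"
  interpret rotated_crown n k z
    using assms(1) unfolding z_def by unfold_locales simp_all
  have S_Inc: "S \<subseteq> Inc n k" using assms(4) unfolding maximal_independent_def independent_def by blast
  interpret arcs: arc_cycle_family "int (n+k)" "int k" "arc ` S"
      "fst (arc (c 0))" "snd (arc (c 0))" "fst (arc (c 1))" "snd (arc (c 1))" "fst (arc (c 2))" "snd (arc (c 2))"
    using arc_cycle_family_of_crown assms(2-4) c z_def by blast
  obtain t f where "1 \<le> t" "matching_arcs (int (n+k)) (int k) (arc ` S) t f"
    using arcs.matching_arcs_nth_arc by blast
  then show ?thesis
    using alt_cycle_unarc matching_conditions_unarc Dset_unarc S_Inc by metis
qed

end
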